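(* Let $\Gamma$ be a reduct of $(\mathbb{Z};<)$ with qe-degree $q$, let $\kappa_1,\kappa_2$ be linear orders, let $S\subseteq\kappa_1.\mathbb{Z}$, and let $f,g\colon S\to\kappa_2.\mathbb{Z}$ satisfy $f\sim_q g$. Then $f$ is a homomorphism from $(\kappa_1.\Gamma)[S]$ to $\kappa_2.\Gamma$ if and only if $g$ is.
   Context: For a linear order $\kappa$, $\kappa.\mathbb{Z}=\kappa\times\mathbb{Z}$ with the lexicographic order; $(a,z)+k=(a,z+k)$. For $x,y\in\kappa.\mathbb{Z}$: $x-y=k\in\mathbb{Z}$ if $x=y+k$, and $x-y=\pm\infty$ if $x,y$ lie in different copies (sign $+$ iff $x>y$). For a reduct $\Gamma$ of $(\mathbb{Z};<)$, $\kappa.\Gamma$ interprets each relation symbol by the relation defined over $(\kappa.\mathbb{Z};<)$ by a first-order formula defining it over $(\mathbb{Z};<)$; $(\kappa.\Gamma)[S]$ is the induced substructure on $S$. The qe-degree of a relation $R$ first-order definable in $(\mathbb{Z};<)$ is the least $q$ such that $R$ has a quantifier-free definition in which every atomic formula has the form $x<y+k$ or $x\le y+k$ with $k\in\mathbb{Z}$, $|k|\le q$; the qe-degree of $\Gamma$ is the supremum over its relations. For $f\colon S\to\kappa.\mathbb{Z}$ and $s\in\mathbb{N}$, $x,y\in S$ are $(f,s)$-connected if there is a sequence $x=u_1,\dots,u_k=y$ in $S$ with $|f(u_i)-f(u_{i+1})|\le s$ for all $i$. For $f,g\colon S\to\kappa.\mathbb{Z}$, $f\sim_s g$ means: $(f,s)$-connectivity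 and $(g,s)$-connectivity coincide; for $(f,s)$-connected $x,y$ we have $f(x)-f(y)=g(x)-g(y)$; and for $x,y$ not $(f,s)$-connected, $f(x)<f(y)\iff g(x)<g(y)$. *)

theory Defs
  imports Main "HOL-Library.Extended_Real"
begin

datatype fm = FLt nat nat | FEq nat nat | FNeg fm | FConj fm fm | FEx nat fm

fun fv :: "fm \<Rightarrow> nat set" where
  "fv (FLt i j) = {i, j}"
| "fv (FEq i j) = {i, j}"
| "fv (FNeg p) = fv p"
| "fv (FConj p r) = fv p \<union> fv r"
| "fv (FEx i p) = fv p - {i}"

fun feval :: "('d \<Rightarrow> 'd \<Rightarrow> bool) \<Rightarrow> (nat \<Rightarrow> 'd) \<Rightarrow> fm \<Rightarrow> bool" where
  "feval lt e (FLt i j) = lt (e i) (e j)"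
| "feval lt e (FEq i j) = (e i = e j)"
| "feval lt e (FNeg p) = (\<not> feval lt e p)"
| "feval lt e (FConj p r) = (feval lt e p \<and> feval lt e r)"
| "feval lt e (FEx i p) = (\<exists>a. feval lt (e(i := a)) p)"

text \<open>kappa.Z = kappa \<times> int with the lexicographic order.\<close>
definition klt :: "('a::linorder \<times> int) \<Rightarrow> ('a \<times> int) \<Rightarrow> bool" where
  "klt x y \<longleftrightarrow> fst x < fst y \<or> (fst x = fst y \<and> snd x < snd y)"

definition kdiff :: "('a::linorder \<times> int) \<Rightarrow> ('a \<times> int) \<Rightarrow> ereal" where
  "kdiff x y = (if fst x = fst y then ereal (real_of_int (snd x - snd y))
               else if klt y x then \<infinity> else - \<infinity>)"

text \<open>A reduct Gamma of (Z;<) is given by its relations, each presented as a pair (n, phi):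
  an n-ary relation defined over (Z;<) by the first-order formula phi with free
  variables among x_0..x_{n-1}.  The relation of Gamma is
  {t \<in> Z^n. (Z;<) |= phi(t)} and the relation of kappa.Gamma is
  {t \<in> (kappa.Z)^n. (kappa.Z;<) |= phi(t)}.\<close>
type_synonym reduct = "(nat \<times> fm) set"

definition is_reduct :: "reduct \<Rightarrow> bool" where
  "is_reduct \<Gamma> \<longleftrightarrow> (\<forall>(n, \<phi>) \<in> \<Gamma>. fv \<phi> \<subseteq> {..<n})"

datatype qf = QTrue | QLt nat nat int | QLe nat nat int | QNeg qf | QConj qf qf

fun qeval :: "(nat \<Rightarrow> int) \<Rightarrow> qf \<Rightarrow> bool" where
  "qeval e QTrue = True"
| "qeval e (QLt i j k) = (e i < e j + k)"
| "qeval e (QLe i j k) = (e i \<le> e j + k)"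
| "qeval e (QNeg p) = (\<not> qeval e p)"
| "qeval e (QConj p r) = (qeval e p \<and> qeval e r)"

fun qvars :: "qf \<Rightarrow> nat set" where
  "qvars QTrue = {}"
| "qvars (QLt i j k) = {i, j}"
| "qvars (QLe i j k) = {i, j}"
| "qvars (QNeg p) = qvars p"
| "qvars (QConj p r) = qvars p \<union> qvars r"

fun qbound :: "qf \<Rightarrow> nat" where
  "qbound QTrue = 0"
| "qbound (QLt i j k) = nat \<bar>k\<bar>"
| "qbound (QLe i j k) = nat \<bar>k\<bar>"
| "qbound (QNeg p) = qbound p"
| "qbound (QConj p r) = max (qbound p) (qbound r)"

definition qf_definable_bound :: "nat \<Rightarrow> fm \<Rightarrow> nat \<Rightarrow> bool" where
  "qf_definable_bound n \<phi> q \<longleftrightarrow>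
     (\<exists>\<psi>. qvars \<psi> \<subseteq> {..<n} \<and> qbound \<psi> \<le> q \<and>
        (\<forall>t :: int list. length t = n \<longrightarrow>
            (feval (<) (\<lambda>i. t ! i) \<phi> \<longleftrightarrow> qeval (\<lambda>i. t ! i) \<psi>)))"

definition rel_qe_degree :: "nat \<Rightarrow> fm \<Rightarrow> nat" where
  "rel_qe_degree n \<phi> = (LEAST q. qf_definable_bound n \<phi> q)"

definition has_qe_degree :: "reduct \<Rightarrow> nat \<Rightarrow> bool" where
  "has_qe_degree \<Gamma> q \<longleftrightarrow>
     (\<forall>(n, \<phi>) \<in> \<Gamma>. rel_qe_degree n \<phi> \<le> q) \<and>
     (\<forall>q'. (\<forall>(n, \<phi>) \<in> \<Gamma>. rel_qe_degree n \<phi> \<le> q') \<longrightarrow> q \<le> q')"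

definition is_hom :: "reduct \<Rightarrow> ('a::linorder \<times> int) set \<Rightarrow> ('a \<times> int \<Rightarrow> 'b::linorder \<times> int) \<Rightarrow> bool" where
  "is_hom \<Gamma> S f \<longleftrightarrow>
     (\<forall>(n, \<phi>) \<in> \<Gamma>. \<forall>t. length t = n \<longrightarrow> set t \<subseteq> S \<longrightarrow>
        feval klt (\<lambda>i. t ! i) \<phi> \<longrightarrow> feval klt (\<lambda>i. map f t ! i) \<phi>)"

definition fs_connected :: "('a \<times> int) set \<Rightarrow> ('a \<times> int \<Rightarrow> 'b::linorder \<times> int) \<Rightarrow> nat
    \<Rightarrow> 'a \<times> int \<Rightarrow> 'a \<times> int \<Rightarrow> bool" where
  "fs_connected S f s x y \<longleftrightarrow> x \<in> S \<and> y \<in> S \<and>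
     (\<lambda>u v. u \<in> S \<and> v \<in> S \<and> \<bar>kdiff (f u) (f v)\<bar> \<le> ereal (real s))\<^sup>*\<^sup>* x y"

definition sim_s :: "('a \<times> int) set \<Rightarrow> nat \<Rightarrow> ('a \<times> int \<Rightarrow> 'b::linorder \<times> int)
    \<Rightarrow> ('a \<times> int \<Rightarrow> 'b \<times> int) \<Rightarrow> bool" where
  "sim_s S s f g \<longleftrightarrow>
     (\<forall>x\<in>S. \<forall>y\<in>S. fs_connected S f s x y \<longleftrightarrow> fs_connected S g s x y) \<and>
     (\<forall>x\<in>S. \<forall>y\<in>S. fs_connected S f s x y \<longrightarrow> kdiff (f x) (f y) = kdiff (g x) (g y)) \<and>
     (\<forall>x\<in>S. \<forall>y\<in>S. \<not> fs_connected S f s x y \<longrightarrow> (klt (f x) (f y) \<longleftrightarrow> klt (g x) (g y)))"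

end

theory Submission
  imports Defs "HOL-Library.Product_Lexorder"
begin

text \<open>
  Whether a {<}-formula of quantifier depth d holds at a tuple of \<open>\<kappa>.\<int>\<close> depends only on the
  pairwise differences of the tuple clipped to the window \<open>[-(2^d - 1), 2^d - 1]\<close>: this is an
  Ehrenfeucht-Fraisse argument, in which one new point can be matched against a tuple whose
  clipped differences agree at twice the threshold. Consequently a formula defining a relation of
  \<open>(\<int>;<)\<close> and any quantifier-free definition of it by atoms \<open>x < y + k\<close> agree on every
  \<open>\<kappa>.\<int>\<close>, so each relation of \<open>\<kappa>.\<Gamma>\<close> is defined by such atoms with \<open>|k| \<le> q\<close>. These atoms
  are preserved when passing from \<open>f\<close> to \<open>g\<close> with \<open>f \<sim>\<^sub>q g\<close>: on \<open>(f,q)\<close>-connected pairs \<open>f\<close> and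
  \<open>g\<close> have equal differences, and on the remaining pairs both differences exceed \<open>q\<close> in
  absolute value and have the same sign.
\<close>

lemma klt_iff_less: "klt x y \<longleftrightarrow> x < y"
  by (simp add: klt_def less_prod_def')

lemma kdiff_self [simp]: "kdiff x x = 0"
  by (simp add: kdiff_def zero_ereal_def)

lemma kdiff_swap: "kdiff y x = - kdiff x y"
  by (auto simp: kdiff_def klt_def)

lemma kdiff_eq_0_iff: "kdiff x y = 0 \<longleftrightarrow> x = y"
  by (cases x; cases y) (auto simp: kdiff_def zero_ereal_def)

lemma kdiff_less_0_iff: "kdiff x y < 0 \<longleftrightarrow> x < y"
  by (cases x; cases y) (auto simp: kdiff_def klt_iff_less less_prod_def')

lemma kdiff_greater_0_iff: "kdiff x y > 0 \<longleftrightarrow> y < x"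
  by (cases x; cases y) (auto simp: kdiff_def klt_iff_less less_prod_def')

lemma kdiff_mono_left: "x \<le> y \<Longrightarrow> kdiff x z \<le> kdiff y z"
  by (cases x; cases y; cases z) (auto simp: kdiff_def klt_def less_eq_prod_def)

lemma kdiff_mono_right: "x \<le> y \<Longrightarrow> kdiff z y \<le> kdiff z x"
  using kdiff_mono_left[of x y z] by (simp add: kdiff_swap[of _ z])

definition kshift :: "'a \<times> int \<Rightarrow> int \<Rightarrow> 'a \<times> int" where
  "kshift x m = (fst x, snd x + m)"

lemma kdiff_kshift: "kdiff (kshift x m) y = ereal (real_of_int m) + kdiff x y"
  by (cases x; cases y) (auto simp: kdiff_def kshift_def klt_def)

lemma kdiff_bounded_imp_kshift:
  assumes "\<bar>kdiff x y\<bar> \<le> ereal (real N)"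
  obtains m where "x = kshift y m" "\<bar>m\<bar> \<le> int N"
proof -
  have same: "fst x = fst y" using assms by (auto simp: kdiff_def split: if_splits)
  then have "\<bar>real_of_int (snd x - snd y)\<bar> \<le> real N" using assms by (simp add: kdiff_def)
  then have "\<bar>snd x - snd y\<bar> \<le> int N" by linarith
  moreover have "x = kshift y (snd x - snd y)" using same by (simp add: kshift_def prod_eq_iff)
  ultimately show ?thesis using that by blast
qed

lemma kdiff_far_sum:
  assumes "z < y" "y < x" "kdiff x y > ereal (real N)" "kdiff y z > ereal (real N)"
  shows "kdiff x z > ereal (real (2 * N + 1))"
proof -
  have int_gap: "1 + 2 * real N < real_of_int (a - c)"
    if "real N < real_of_int (a - b)" "real N < real_of_int (b - c)" for a b c :: int
  proof -
    have "int N < a - b" "int N < b - c" using that by linarith+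
    then show ?thesis by linarith
  qed
  show ?thesis using assms
    by (cases x; cases y; cases z)
      (auto simp: kdiff_def klt_def less_prod_def' int_gap simp flip: of_int_diff)
qed

section \<open>Clipped differences and the Ehrenfeucht-Fraisse game\<close>

definition clip :: "nat \<Rightarrow> ereal \<Rightarrow> ereal" where
  "clip N d = (if d > ereal (real N) then ereal (real N + 1)
     else if d < - ereal (real N) then - ereal (real N + 1) else d)"

lemma clip_eq_imp_same_side:
  assumes "clip N d = clip N d'" "\<bar>k\<bar> \<le> int N"
  shows "(d < ereal (real_of_int k) \<longleftrightarrow> d' < ereal (real_of_int k)) \<and>
         (d \<le> ereal (real_of_int k) \<longleftrightarrow> d' \<le> ereal (real_of_int k))"
proof -
  have "- real N \<le> real_of_int k" "real_of_int k \<le> real N" using assms(2) by linarith+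
  then show ?thesis using assms(1)
    by (cases d; cases d') (auto simp: clip_def split: if_splits)
qed

lemma clip_eq_imp_greater: "clip N d = clip N d' \<Longrightarrow> d > ereal (real N) \<Longrightarrow> d' > ereal (real N)"
  by (cases d; cases d') (auto simp: clip_def split: if_splits)

lemma clip_uminus: "clip N (- d) = - clip N d"
  by (cases d) (auto simp: clip_def)

lemma clip_eq_mono:
  assumes "clip N d = clip N d'" "M \<le> N"
  shows "clip M d = clip M d'"
proof -
  have "real M \<le> real N" using assms(2) by simp
  then show ?thesis using assms(1)
    by (cases d; cases d') (auto simp: clip_def split: if_splits)
qed

lemma clip_eq_add:
  assumes "clip (2 * N + 1) d = clip (2 * N + 1) d'" "\<bar>m\<bar> \<le> int N"
  shows "clip N (ereal (real_of_int m) + d) = clip N (ereal (real_of_int m) + d')"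
proof -
  have "- real N \<le> real_of_int m" "real_of_int m \<le> real N" using assms(2) by linarith+
  then show ?thesis using assms(1)
    by (cases d; cases d') (auto simp: clip_def split: if_splits)
qed

lemma clip_eq_if_far:
  assumes "(d > ereal (real N) \<and> d' > ereal (real N)) \<or> (d < - ereal (real N) \<and> d' < - ereal (real N))"
  shows "clip N d = clip N d'"
  using assms by (cases d; cases d') (auto simp: clip_def)

lemma exists_kpoint_between_far:
  fixes A B :: "('b::linorder \<times> int) set"
  assumes "finite A" "finite B"
    and gap: "\<And>x y. x \<in> A \<Longrightarrow> y \<in> B \<Longrightarrow> kdiff y x > ereal (real (2 * N + 1))"
  obtains c where "\<forall>x\<in>A. kdiff c x > ereal (real N)" "\<forall>y\<in>B. kdiff c y < - ereal (real N)"
proof (cases "A = {}")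
  case False
  define c where "c = kshift (Max A) (int N + 1)"
  have "kdiff c x > ereal (real N)" if "x \<in> A" for x
  proof -
    have "0 \<le> kdiff (Max A) x"
      using kdiff_mono_left[of x "Max A" x] \<open>finite A\<close> that by simp
    then show ?thesis unfolding c_def kdiff_kshift by (cases "kdiff (Max A) x") auto
  qed
  moreover have "kdiff c y < - ereal (real N)" if "y \<in> B" for y
  proof -
    have "kdiff y (Max A) > ereal (real (2 * N + 1))"
      using gap False \<open>finite A\<close> that by simp
    then have "kdiff (Max A) y < - ereal (real (2 * N + 1))"
      by (simp add: kdiff_swap[of y] ereal_less_uminus_reorder)
    then show ?thesis unfolding c_def kdiff_kshift by (cases "kdiff (Max A) y") auto
  qed
  ultimately show ?thesis using that by blast
next
  case True
  define c where "c = kshift (Min B) (- int N - 1)"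
  have "kdiff c y < - ereal (real N)" if "y \<in> B" for y
  proof -
    have "kdiff (Min B) y \<le> 0"
      using kdiff_mono_right[of "Min B" y "Min B"] \<open>finite B\<close> that by simp
    then show ?thesis using that unfolding c_def by (cases "kdiff (Min B) y") (auto simp: kdiff_kshift)
  qed
  then show ?thesis using that True by blast
qed

definition clips_agree ::
    "nat \<Rightarrow> nat set \<Rightarrow> (nat \<Rightarrow> 'a::linorder \<times> int) \<Rightarrow> (nat \<Rightarrow> 'b::linorder \<times> int) \<Rightarrow> bool" where
  "clips_agree N V e e' \<longleftrightarrow>
     (\<forall>i\<in>V. \<forall>j\<in>V. clip N (kdiff (e i) (e j)) = clip N (kdiff (e' i) (e' j)))"

lemma clips_agree_sym: "clips_agree N V e e' \<Longrightarrow> clips_agree N V e' e"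
  by (simp add: clips_agree_def)

lemma clips_agree_mono: "clips_agree N V e e' \<Longrightarrow> M \<le> N \<Longrightarrow> W \<subseteq> V \<Longrightarrow> clips_agree M W e e'"
  unfolding clips_agree_def using clip_eq_mono by blast

text \<open>
  A point within distance N of some \<open>e i\<close> is copied to the same
  offset from \<open>e' i\<close>; a point far from all \<open>e i\<close> is placed far between the images of the points
  below it and those above it, which are more than \<open>2N + 1\<close> apart by the agreement hypothesis.
\<close>
lemma clips_agree_extend_point:
  assumes agree: "clips_agree (2 * N + 1) V e e'" and "finite V"
  obtains a' where "\<forall>i\<in>V. clip N (kdiff a (e i)) = clip N (kdiff a' (e' i))"
proof (cases "\<exists>i0\<in>V. \<bar>kdiff a (e i0)\<bar> \<le> ereal (real N)")
  case True
  then obtain i0 where i0: "i0 \<in> V" "\<bar>kdiff a (e i0)\<bar> \<le> ereal (real N)" by blast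
  then obtain m where a: "a = kshift (e i0) m" and m: "\<bar>m\<bar> \<le> int N"
    using kdiff_bounded_imp_kshift by blast
  have "clip N (kdiff a (e i)) = clip N (kdiff (kshift (e' i0) m) (e' i))" if "i \<in> V" for i
  proof -
    have "clip (2 * N + 1) (kdiff (e i0) (e i)) = clip (2 * N + 1) (kdiff (e' i0) (e' i))"
      using agree i0(1) that unfolding clips_agree_def by blast
    then show ?thesis unfolding a kdiff_kshift by (rule clip_eq_add[OF _ m])
  qed
  then show ?thesis using that by blast
next
  case False
  define L where "L = {i\<in>V. e i < a}"
  define U where "U = {i\<in>V. a < e i}"
  have far: "\<bar>kdiff a (e i)\<bar> > ereal (real N)" if "i \<in> V" for i
    using False that by auto
  have "e i \<noteq> a" if "i \<in> V" for i
    using far[OF that] by auto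
  then have V: "V = L \<union> U"
    by (auto simp: L_def U_def neq_iff)
  have L_far: "kdiff a (e i) > ereal (real N)" if "i \<in> L" for i
    using far[of i] kdiff_greater_0_iff[of a "e i"] that
    by (cases "kdiff a (e i)") (auto simp: L_def)
  have U_far: "kdiff a (e i) < - ereal (real N)" if "i \<in> U" for i
    using far[of i] kdiff_less_0_iff[of a "e i"] that
    by (cases "kdiff a (e i)") (auto simp: U_def)
  have gap: "kdiff (e' u) (e' l) > ereal (real (2 * N + 1))" if "l \<in> L" "u \<in> U" for l u
  proof -
    have "e l < a" "a < e u" using that by (auto simp: L_def U_def)
    moreover have "kdiff (e u) a > ereal (real N)"
      using U_far[OF that(2)] unfolding kdiff_swap[of "e u"] by (cases "kdiff a (e u)") auto
    ultimately have "kdiff (e u) (e l) > ereal (real (2 * N + 1))"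
      using kdiff_far_sum L_far[OF that(1)] by blast
    moreover have "clip (2 * N + 1) (kdiff (e u) (e l)) = clip (2 * N + 1) (kdiff (e' u) (e' l))"
      using agree that by (auto simp: clips_agree_def L_def U_def)
    ultimately show ?thesis
      using clip_eq_imp_greater by blast
  qed
  have "finite L" "finite U" using \<open>finite V\<close> V by auto
  then obtain a' where
    a'L: "\<forall>x\<in>e' ` L. kdiff a' x > ereal (real N)" and
    a'U: "\<forall>y\<in>e' ` U. kdiff a' y < - ereal (real N)"
    using exists_kpoint_between_far[of "e' ` L" "e' ` U"] gap by blast
  have "clip N (kdiff a (e i)) = clip N (kdiff a' (e' i))" if "i \<in> V" for i
  proof (rule clip_eq_if_far)
    show "(kdiff a (e i) > ereal (real N) \<and> kdiff a' (e' i) > ereal (real N)) \<or>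
      (kdiff a (e i) < - ereal (real N) \<and> kdiff a' (e' i) < - ereal (real N))"
      using V that L_far U_far a'L a'U by blast
  qed
  then show ?thesis using that by blast
qed

lemma clips_agree_extend:
  assumes agree: "clips_agree (2 * N + 1) V e e'" and "finite V"
  obtains a' where "clips_agree N (insert x V) (e(x := a)) (e'(x := a'))"
proof -
  have agree': "clips_agree (2 * N + 1) (V - {x}) e e'"
    using clips_agree_mono[OF agree] by blast
  obtain a' where a': "\<forall>i\<in>V - {x}. clip N (kdiff a (e i)) = clip N (kdiff a' (e' i))"
    using clips_agree_extend_point[OF agree'] \<open>finite V\<close> by blast
  have "clips_agree N (V - {x}) e e'"
    using clips_agree_mono[OF agree'] by simp
  then have "clips_agree N (insert x V) (e(x := a)) (e'(x := a'))"
    using a' unfolding clips_agree_def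
    by (auto simp: kdiff_swap[of _ a] kdiff_swap[of _ a'] clip_uminus)
  then show ?thesis using that by blast
qed

lemma exists_clips_agree:
  fixes e :: "nat \<Rightarrow> 'a::linorder \<times> int"
  assumes "finite V"
  shows "\<exists>e' :: nat \<Rightarrow> 'b::linorder \<times> int. clips_agree N V e e'"
  using assms
proof (induction V arbitrary: N rule: finite_induct)
  case empty
  then show ?case by (simp add: clips_agree_def)
next
  case (insert x V)
  obtain e' :: "nat \<Rightarrow> 'b \<times> int" where "clips_agree (2 * N + 1) V e e'"
    using insert.IH by blast
  then obtain a' where "clips_agree N (insert x V) (e(x := e x)) (e'(x := a'))"
    using clips_agree_extend insert.hyps(1) by blast
  then show ?case by auto
qed

fun qdepth :: "fm \<Rightarrow> nat" where
  "qdepth (FLt i j) = 0"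
| "qdepth (FEq i j) = 0"
| "qdepth (FNeg p) = qdepth p"
| "qdepth (FConj p r) = max (qdepth p) (qdepth r)"
| "qdepth (FEx i p) = Suc (qdepth p)"

fun ef_threshold :: "nat \<Rightarrow> nat" where
  "ef_threshold 0 = 0"
| "ef_threshold (Suc d) = 2 * ef_threshold d + 1"

lemma ef_threshold_mono: "d \<le> d' \<Longrightarrow> ef_threshold d \<le> ef_threshold d'"
  by (rule monoD[OF mono_iff_le_Suc[THEN iffD2]]) auto

lemma finite_fv: "finite (fv \<phi>)"
  by (induction \<phi>) auto

lemma feval_eq_if_clips_agree:
  fixes e :: "nat \<Rightarrow> 'a::linorder \<times> int" and e' :: "nat \<Rightarrow> 'b::linorder \<times> int"
  assumes "clips_agree N (fv \<phi>) e e'" "ef_threshold (qdepth \<phi>) \<le> N"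
  shows "feval klt e \<phi> = feval klt e' \<phi>"
  using assms
proof (induction \<phi> arbitrary: N e e')
  case (FLt i j)
  then have "clip N (kdiff (e i) (e j)) = clip N (kdiff (e' i) (e' j))"
    by (simp add: clips_agree_def)
  from clip_eq_imp_same_side[OF this, of 0] show ?case
    by (simp add: klt_iff_less zero_ereal_def flip: kdiff_less_0_iff)
next
  case (FEq i j)
  then have "clip N (kdiff (e i) (e j)) = clip N (kdiff (e' i) (e' j))"
    by (simp add: clips_agree_def)
  from clip_eq_imp_same_side[OF this, of 0]
  have "(kdiff (e i) (e j) \<le> 0 \<and> \<not> kdiff (e i) (e j) < 0) \<longleftrightarrow>
        (kdiff (e' i) (e' j) \<le> 0 \<and> \<not> kdiff (e' i) (e' j) < 0)"
    by (simp add: zero_ereal_def)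
  then have "kdiff (e i) (e j) = 0 \<longleftrightarrow> kdiff (e' i) (e' j) = 0"
    by (metis order_le_less order_less_irrefl)
  then show ?case by (simp add: kdiff_eq_0_iff)
next
  case (FConj p r)
  then show ?case
    using ef_threshold_mono[of "qdepth p" "max (qdepth p) (qdepth r)"]
      ef_threshold_mono[of "qdepth r" "max (qdepth p) (qdepth r)"]
    by (auto dest: clips_agree_mono[where M = N])
next
  case (FEx i p)
  let ?M = "ef_threshold (qdepth p)"
  have agree: "clips_agree (2 * ?M + 1) (fv p - {i}) e e'"
    using FEx.prems by (auto intro: clips_agree_mono)
  have fv_p: "fv p \<subseteq> insert i (fv p - {i})" by auto
  have fin: "finite (fv p - {i})" by (simp add: finite_fv)
  show ?case
  proof
    assume "feval klt e (FEx i p)"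
    then obtain a where a: "feval klt (e(i := a)) p" by auto
    obtain a' where "clips_agree ?M (insert i (fv p - {i})) (e(i := a)) (e'(i := a'))"
      using clips_agree_extend[OF agree fin] by blast
    then have "feval klt (e'(i := a')) p"
      using FEx.IH[OF clips_agree_mono[OF _ order.refl fv_p] order.refl] a by blast
    then show "feval klt e' (FEx i p)" unfolding feval.simps by blast
  next
    assume "feval klt e' (FEx i p)"
    then obtain a' where a': "feval klt (e'(i := a')) p" by auto
    obtain a where "clips_agree ?M (insert i (fv p - {i})) (e'(i := a')) (e(i := a))"
      using clips_agree_extend[OF clips_agree_sym[OF agree] fin] by blast
    then have "feval klt (e(i := a)) p"
      using FEx.IH[OF clips_agree_sym[OF clips_agree_mono[OF _ order.refl fv_p]] order.refl] a' by blast
    then show "feval klt e (FEx i p)" unfolding feval.simps by blast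
  qed
qed simp

section \<open>Quantifier-free definitions transfer to \<open>\<kappa>.\<int>\<close>\<close>

lemma feval_bij_iso:
  assumes "bij h" and "\<And>x y. lt' (h x) (h y) \<longleftrightarrow> lt x y"
  shows "feval lt' (h \<circ> e) \<phi> = feval lt e \<phi>"
proof (induction \<phi> arbitrary: e)
  case (FEx i p)
  have upd: "(h \<circ> e)(i := h a) = h \<circ> e(i := a)" for a by auto
  have "feval lt' ((h \<circ> e)(i := h a)) p \<longleftrightarrow> feval lt (e(i := a)) p" for a
    by (simp only: upd FEx.IH)
  moreover have "(\<exists>b. feval lt' ((h \<circ> e)(i := b)) p) \<longleftrightarrow> (\<exists>a. feval lt' ((h \<circ> e)(i := h a)) p)"
    using \<open>bij h\<close> by (metis bij_pointE)
  ultimately show ?case by (simp only: feval.simps)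
qed (simp_all add: assms(2) inj_eq[OF bij_is_inj[OF assms(1)]])

lemma feval_klt_unit: "feval klt (\<lambda>i. ((), e i)) \<phi> = feval (<) e \<phi>"
proof -
  have "bij (Pair ())" by (rule bijI) (auto simp: inj_def surj_def)
  then show ?thesis using feval_bij_iso[of "Pair ()" klt "(<)" e \<phi>] by (simp add: klt_def comp_def)
qed

fun qeval_k :: "(nat \<Rightarrow> 'b::linorder \<times> int) \<Rightarrow> qf \<Rightarrow> bool" where
  "qeval_k e QTrue = True"
| "qeval_k e (QLt i j k) = (kdiff (e i) (e j) < ereal (real_of_int k))"
| "qeval_k e (QLe i j k) = (kdiff (e i) (e j) \<le> ereal (real_of_int k))"
| "qeval_k e (QNeg p) = (\<not> qeval_k e p)"
| "qeval_k e (QConj p r) = (qeval_k e p \<and> qeval_k e r)"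

lemma qeval_k_unit: "qeval_k (\<lambda>i. ((), e i)) \<psi> = qeval e \<psi>"
proof -
  have "real_of_int a - real_of_int b < real_of_int k \<longleftrightarrow> a < b + k"
    "real_of_int a - real_of_int b \<le> real_of_int k \<longleftrightarrow> a \<le> b + k" for a b k :: int
    by linarith+
  then show ?thesis by (induction \<psi>) (auto simp: kdiff_def)
qed

lemma qeval_k_eq_if_clips_agree:
  assumes "clips_agree N V u w" "qvars \<psi> \<subseteq> V" "qbound \<psi> \<le> N"
  shows "qeval_k u \<psi> = qeval_k w \<psi>"
  using assms
proof (induction \<psi>)
  case (QLt i j k)
  then have "clip N (kdiff (u i) (u j)) = clip N (kdiff (w i) (w j))" "\<bar>k\<bar> \<le> int N"
    by (auto simp: clips_agree_def)
  from clip_eq_imp_same_side[OF this] show ?case by simp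
next
  case (QLe i j k)
  then have "clip N (kdiff (u i) (u j)) = clip N (kdiff (w i) (w j))" "\<bar>k\<bar> \<le> int N"
    by (auto simp: clips_agree_def)
  from clip_eq_imp_same_side[OF this] show ?case by simp
qed auto

fun qconj :: "qf list \<Rightarrow> qf" where
  "qconj [] = QTrue"
| "qconj (p # ps) = QConj p (qconj ps)"

definition qdisj :: "qf list \<Rightarrow> qf" where
  "qdisj ps = QNeg (qconj (map QNeg ps))"

lemma qeval_qconj: "qeval e (qconj ps) \<longleftrightarrow> (\<forall>p\<in>set ps. qeval e p)"
  by (induction ps) auto

lemma qvars_qconj: "qvars (qconj ps) = (\<Union>p\<in>set ps. qvars p)"
  by (induction ps) auto

lemma qbound_qconj: "\<forall>p\<in>set ps. qbound p \<le> B \<Longrightarrow> qbound (qconj ps) \<le> B"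
  by (induction ps) auto

lemma qeval_qdisj: "qeval e (qdisj ps) \<longleftrightarrow> (\<exists>p\<in>set ps. qeval e p)"
  by (simp add: qdisj_def qeval_qconj)

lemma qvars_qdisj: "qvars (qdisj ps) = (\<Union>p\<in>set ps. qvars p)"
  by (simp add: qdisj_def qvars_qconj)

lemma qbound_qdisj: "\<forall>p\<in>set ps. qbound p \<le> B \<Longrightarrow> qbound (qdisj ps) \<le> B"
  by (simp add: qdisj_def qbound_qconj)

definition iclip :: "nat \<Rightarrow> int \<Rightarrow> int" where
  "iclip N d = max (- (int N + 1)) (min (int N + 1) d)"

lemma clip_of_int: "clip N (ereal (real_of_int d)) = ereal (real_of_int (iclip N d))"
proof -
  have "real_of_int d > real N \<longleftrightarrow> d > int N" "real_of_int d < - real N \<longleftrightarrow> d < - int N"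
    by linarith+
  then show ?thesis by (auto simp: clip_def iclip_def)
qed

definition clip_qf :: "nat \<Rightarrow> nat \<Rightarrow> nat \<Rightarrow> int \<Rightarrow> qf" where
  "clip_qf N i j c = (if c > int N then QNeg (QLe i j (int N))
     else if c < - int N then QLt i j (- int N)
     else QConj (QLe i j c) (QNeg (QLt i j c)))"

lemma qeval_clip_qf: "qeval e (clip_qf N i j (iclip N d)) \<longleftrightarrow> iclip N (e i - e j) = iclip N d"
  by (auto simp: clip_qf_def iclip_def)

definition clip_pattern :: "nat \<Rightarrow> nat \<Rightarrow> int list \<Rightarrow> int list" where
  "clip_pattern N n t = map (\<lambda>(i, j). iclip N (t ! i - t ! j)) (List.product [0..<n] [0..<n])"

definition pattern_qf :: "nat \<Rightarrow> nat \<Rightarrow> int list \<Rightarrow> qf" where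
  "pattern_qf N n s =
     qconj (map (\<lambda>(i, j). clip_qf N i j (iclip N (s ! i - s ! j))) (List.product [0..<n] [0..<n]))"

lemma clip_pattern_eq_iff:
  "clip_pattern N n s = clip_pattern N n t \<longleftrightarrow>
     (\<forall>i<n. \<forall>j<n. iclip N (s ! i - s ! j) = iclip N (t ! i - t ! j))"
  by (auto simp: clip_pattern_def map_eq_conv)

lemma qeval_pattern_qf:
  "qeval (\<lambda>i. t ! i) (pattern_qf N n s) \<longleftrightarrow> clip_pattern N n t = clip_pattern N n s"
  by (auto simp: pattern_qf_def qeval_qconj qeval_clip_qf clip_pattern_eq_iff)

lemma qvars_clip_qf: "qvars (clip_qf N i j c) = {i, j}"
  by (simp add: clip_qf_def)

lemma qbound_clip_qf: "qbound (clip_qf N i j c) \<le> N"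
  by (auto simp: clip_qf_def)

lemma qvars_pattern_qf: "qvars (pattern_qf N n s) \<subseteq> {..<n}"
  by (auto simp: pattern_qf_def qvars_qconj qvars_clip_qf)

lemma qbound_pattern_qf: "qbound (pattern_qf N n s) \<le> N"
  unfolding pattern_qf_def by (rule qbound_qconj) (auto simp: qbound_clip_qf)

lemma finite_range_clip_pattern: "finite (range (clip_pattern N n))"
proof (rule finite_subset)
  show "range (clip_pattern N n) \<subseteq> {xs. set xs \<subseteq> {- (int N + 1)..int N + 1} \<and> length xs = n * n}"
    by (auto simp: clip_pattern_def iclip_def)
qed (rule finite_lists_length_eq, simp)

lemma feval_eq_if_clip_pattern_eq:
  assumes "fv \<phi> \<subseteq> {..<n}"
    and "clip_pattern (ef_threshold (qdepth \<phi>)) n s = clip_pattern (ef_threshold (qdepth \<phi>)) n t"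
  shows "feval (<) (\<lambda>i. s ! i) \<phi> = feval (<) (\<lambda>i. t ! i) \<phi>"
proof -
  have "clips_agree (ef_threshold (qdepth \<phi>)) {..<n} (\<lambda>i. ((), s ! i)) (\<lambda>i. ((), t ! i))"
    using assms(2) by (simp add: clips_agree_def clip_pattern_eq_iff kdiff_def clip_of_int flip: of_int_diff)
  then have "clips_agree (ef_threshold (qdepth \<phi>)) (fv \<phi>) (\<lambda>i. ((), s ! i)) (\<lambda>i. ((), t ! i))"
    using assms(1) clips_agree_mono by blast
  then show ?thesis
    using feval_eq_if_clips_agree by (fastforce simp flip: feval_klt_unit)
qed

text \<open>
  This makes the \<open>LEAST\<close> in \<open>rel_qe_degree\<close> attained. The defining formula is the disjunction,
  over representatives of the finitely many clip patterns of satisfying tuples, of the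
  quantifier-free descriptions of those patterns.
\<close>
lemma qf_definable_bound_ef_threshold:
  assumes "fv \<phi> \<subseteq> {..<n}"
  shows "qf_definable_bound n \<phi> (ef_threshold (qdepth \<phi>))"
proof -
  define N where "N = ef_threshold (qdepth \<phi>)"
  define T where "T = {t :: int list. length t = n \<and> feval (<) (\<lambda>i. t ! i) \<phi>}"
  define reps where "reps = inv_into T (clip_pattern N n) ` clip_pattern N n ` T"
  have "finite (clip_pattern N n ` T)"
    using finite_range_clip_pattern by (rule finite_subset[rotated]) auto
  then have "finite reps" unfolding reps_def by (rule finite_imageI)
  then obtain rs where rs: "set rs = reps" using finite_list by blast
  have reps_T: "reps \<subseteq> T" by (auto simp: reps_def inv_into_into)
  have "qeval (\<lambda>i. t ! i) (qdisj (map (pattern_qf N n) rs)) \<longleftrightarrow> feval (<) (\<lambda>i. t ! i) \<phi>"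
    if "length t = n" for t :: "int list"
  proof -
    have "qeval (\<lambda>i. t ! i) (qdisj (map (pattern_qf N n) rs)) \<longleftrightarrow>
        (\<exists>s\<in>reps. clip_pattern N n t = clip_pattern N n s)"
      by (simp add: qeval_qdisj qeval_pattern_qf rs)
    also have "\<dots> \<longleftrightarrow> t \<in> T"
    proof
      assume "\<exists>s\<in>reps. clip_pattern N n t = clip_pattern N n s"
      then obtain s where "s \<in> T" "clip_pattern N n t = clip_pattern N n s"
        using reps_T by blast
      then show "t \<in> T"
        using feval_eq_if_clip_pattern_eq[OF assms, of t s] that by (simp add: T_def N_def)
    next
      assume "t \<in> T"
      then show "\<exists>s\<in>reps. clip_pattern N n t = clip_pattern N n s"
        by (auto simp: reps_def f_inv_into_f)
    qed
    finally show ?thesis using that by (simp add: T_def)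
  qed
  moreover have "qvars (qdisj (map (pattern_qf N n) rs)) \<subseteq> {..<n}"
    by (auto simp: qvars_qdisj dest: qvars_pattern_qf[THEN subsetD])
  moreover have "qbound (qdisj (map (pattern_qf N n) rs)) \<le> N"
    by (rule qbound_qdisj) (simp add: qbound_pattern_qf)
  ultimately show ?thesis unfolding qf_definable_bound_def N_def by blast
qed

lemma feval_klt_iff_qeval_k:
  fixes u :: "nat \<Rightarrow> 'b::linorder \<times> int"
  assumes fv: "fv \<phi> \<subseteq> {..<n}" and qv: "qvars \<psi> \<subseteq> {..<n}"
    and def: "\<forall>t::int list. length t = n \<longrightarrow> (feval (<) (\<lambda>i. t ! i) \<phi> \<longleftrightarrow> qeval (\<lambda>i. t ! i) \<psi>)"
  shows "feval klt u \<phi> \<longleftrightarrow> qeval_k u \<psi>"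
proof -
  \<comment> \<open>pull \<open>u\<close> back to a tuple of integers with the same clipped differences\<close>
  define N where "N = max (ef_threshold (qdepth \<phi>)) (qbound \<psi>)"
  obtain w :: "nat \<Rightarrow> unit \<times> int" where w: "clips_agree N {..<n} u w"
    using exists_clips_agree by blast
  define t where "t = map (\<lambda>i. snd (w i)) [0..<n]"
  have "w i = ((), t ! i)" if "i < n" for i
    using that by (simp add: t_def prod_eq_iff)
  then have agree: "clips_agree N {..<n} u (\<lambda>i. ((), t ! i))"
    using w by (simp add: clips_agree_def)
  have "feval klt u \<phi> = feval klt (\<lambda>i. ((), t ! i)) \<phi>"
    using feval_eq_if_clips_agree[OF clips_agree_mono[OF agree order.refl fv]] by (simp add: N_def)
  also have "\<dots> = qeval (\<lambda>i. t ! i) \<psi>"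
    using def by (simp add: feval_klt_unit t_def)
  also have "\<dots> = qeval_k u \<psi>"
    using qeval_k_eq_if_clips_agree[OF agree qv] by (simp add: qeval_k_unit N_def)
  finally show ?thesis .
qed

lemma qf_definition_within_qe_degree:
  assumes "is_reduct \<Gamma>" "has_qe_degree \<Gamma> q" "(n, \<phi>) \<in> \<Gamma>"
  obtains \<psi> where "qvars \<psi> \<subseteq> {..<n}" "qbound \<psi> \<le> q"
    "\<forall>t::int list. length t = n \<longrightarrow> (feval (<) (\<lambda>i. t ! i) \<phi> \<longleftrightarrow> qeval (\<lambda>i. t ! i) \<psi>)"
proof -
  have "fv \<phi> \<subseteq> {..<n}" using assms(1,3) by (auto simp: is_reduct_def)
  then have "qf_definable_bound n \<phi> (rel_qe_degree n \<phi>)"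
    unfolding rel_qe_degree_def by (rule LeastI[of "qf_definable_bound n \<phi>", OF qf_definable_bound_ef_threshold])
  moreover have "rel_qe_degree n \<phi> \<le> q" using assms(2,3) by (auto simp: has_qe_degree_def)
  ultimately show ?thesis using that unfolding qf_definable_bound_def by fastforce
qed

lemma fs_connected_if_close:
  "x \<in> S \<Longrightarrow> y \<in> S \<Longrightarrow> \<bar>kdiff (f x) (f y)\<bar> \<le> ereal (real s) \<Longrightarrow> fs_connected S f s x y"
  by (simp add: fs_connected_def r_into_rtranclp)

lemma sim_s_sym:
  assumes "sim_s S s f g"
  shows "sim_s S s g f"
proof -
  from assms have conn: "\<forall>x\<in>S. \<forall>y\<in>S. fs_connected S f s x y \<longleftrightarrow> fs_connected S g s x y"
    and diff: "\<forall>x\<in>S. \<forall>y\<in>S. fs_connected S f s x y \<longrightarrow> kdiff (f x) (f y) = kdiff (g x) (g y)"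
    and order: "\<forall>x\<in>S. \<forall>y\<in>S. \<not> fs_connected S f s x y \<longrightarrow> (klt (f x) (f y) \<longleftrightarrow> klt (g x) (g y))"
    unfolding sim_s_def by blast+
  then show ?thesis unfolding sim_s_def by simp
qed

lemma sim_s_kdiff_same_side:
  assumes sim: "sim_s S q f g" and x: "x \<in> S" and y: "y \<in> S" and k: "\<bar>k\<bar> \<le> int q"
  shows "(kdiff (f x) (f y) < ereal (real_of_int k) \<longleftrightarrow> kdiff (g x) (g y) < ereal (real_of_int k)) \<and>
         (kdiff (f x) (f y) \<le> ereal (real_of_int k) \<longleftrightarrow> kdiff (g x) (g y) \<le> ereal (real_of_int k))"
proof (cases "fs_connected S f q x y")
  case True
  then show ?thesis using sim x y by (simp add: sim_s_def)
next
  case False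
  then have g_far: "\<not> fs_connected S g q x y" and "klt (f x) (f y) \<longleftrightarrow> klt (g x) (g y)"
    using sim x y by (auto simp: sim_s_def)
  then have order: "kdiff (f x) (f y) < 0 \<longleftrightarrow> kdiff (g x) (g y) < 0"
    by (simp add: kdiff_less_0_iff klt_iff_less)
  have "\<not> \<bar>kdiff (f x) (f y)\<bar> \<le> ereal (real q)" "\<not> \<bar>kdiff (g x) (g y)\<bar> \<le> ereal (real q)"
    using False g_far fs_connected_if_close[OF x y] by blast+
  moreover have "- real q \<le> real_of_int k" "real_of_int k \<le> real q" using k by linarith+
  ultimately show ?thesis using order
    by (cases "kdiff (f x) (f y)"; cases "kdiff (g x) (g y)") auto
qed

lemma qeval_k_map_eq_if_sim_s:
  assumes sim: "sim_s S q f g" and "qvars \<psi> \<subseteq> {..<length t}" "qbound \<psi> \<le> q" "set t \<subseteq> S"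
  shows "qeval_k (\<lambda>i. map f t ! i) \<psi> = qeval_k (\<lambda>i. map g t ! i) \<psi>"
  using assms(2-)
proof (induction \<psi>)
  case (QLt i j k)
  then have "t ! i \<in> S" "t ! j \<in> S" "\<bar>k\<bar> \<le> int q" by (auto dest: nth_mem)
  from sim_s_kdiff_same_side[OF sim this] show ?case using QLt.prems by simp
next
  case (QLe i j k)
  then have "t ! i \<in> S" "t ! j \<in> S" "\<bar>k\<bar> \<le> int q" by (auto dest: nth_mem)
  from sim_s_kdiff_same_side[OF sim this] show ?case using QLe.prems by simp
qed auto

lemma is_hom_if_sim_s:
  fixes S :: "('a::linorder \<times> int) set" and f g :: "'a \<times> int \<Rightarrow> 'b::linorder \<times> int"
  assumes "is_reduct \<Gamma>" "has_qe_degree \<Gamma> q" "sim_s S q f g" "is_hom \<Gamma> S f"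
  shows "is_hom \<Gamma> S g"
proof -
  have "feval klt (\<lambda>i. map g t ! i) \<phi>"
    if \<phi>: "(n, \<phi>) \<in> \<Gamma>" and t: "length t = n" "set t \<subseteq> S" "feval klt (\<lambda>i. t ! i) \<phi>"
    for n \<phi> and t :: "('a \<times> int) list"
  proof -
    have fv: "fv \<phi> \<subseteq> {..<n}" using assms(1) \<phi> by (auto simp: is_reduct_def)
    obtain \<psi> where \<psi>: "qvars \<psi> \<subseteq> {..<n}" "qbound \<psi> \<le> q"
      "\<forall>t::int list. length t = n \<longrightarrow> (feval (<) (\<lambda>i. t ! i) \<phi> \<longleftrightarrow> qeval (\<lambda>i. t ! i) \<psi>)"
      using qf_definition_within_qe_degree[OF assms(1,2) \<phi>] by blast
    have "feval klt (\<lambda>i. map f t ! i) \<phi>" using assms(4) \<phi> t by (auto simp: is_hom_def)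
    then have "qeval_k (\<lambda>i. map f t ! i) \<psi>" using feval_klt_iff_qeval_k[OF fv \<psi>(1,3)] by blast
    then have "qeval_k (\<lambda>i. map g t ! i) \<psi>"
      using qeval_k_map_eq_if_sim_s[OF assms(3)] \<psi>(1,2) t by simp
    then show ?thesis using feval_klt_iff_qeval_k[OF fv \<psi>(1,3)] by blast
  qed
  then show ?thesis unfolding is_hom_def by blast
qed

theorem mainTheorem6:
  fixes \<Gamma> :: reduct and q :: nat
    and S :: "('a::linorder \<times> int) set"
    and f g :: "'a \<times> int \<Rightarrow> 'b::linorder \<times> int"
  assumes "is_reduct \<Gamma>"
    and "has_qe_degree \<Gamma> q"
    and "sim_s S q f g"
  shows "is_hom \<Gamma> S f \<longleftrightarrow> is_hom \<Gamma> S g"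
  using is_hom_if_sim_s[OF assms] is_hom_if_sim_s[OF assms(1,2) sim_s_sym[OF assms(3)]] by blast

end
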